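(* Under noiseless asynchronous updates, each of the squeezing codes $\mathsf{R}$, $\mathsf{F}$, $\mathsf{M}$ on the $L\times L$ torus has exactly the two configurations $s_+$ (all spins $+1$) and $s_-$ (all spins $-1$) as absorbing states; i.e. a configuration $s$ is left unchanged by every possible single-site update (of either the $\wedge$ or the $\vee$ type, at any site) if and only if $s\in\{s_+,s_-\}$.
   Context: Spins $s_{\mathbf r}\in\{+1,-1\}$ on $\mathbf r\in(\mathbb Z/L\mathbb Z)^2$ (periodic boundary conditions); $\hat{\mathbf x}=(1,0)$, $\hat{\mathbf y}=(0,1)$. Treat $+1$ as true and $-1$ as false, so $\wedge=\min$, $\vee=\max$. Each rule is given by two neighborhoods $\mathcal R^\wedge,\mathcal R^\vee$; a $\wedge$-update at site $\mathbf r$ replaces $s_{\mathbf r}$ by $\bigwedge_{\boldsymbol\delta\in\mathcal R^\wedge}s_{\mathbf r+\boldsymbol\delta}$, and a $\vee$-update replaces it by $\bigvee_{\boldsymbol\delta\in\mathcal R^\vee}s_{\mathbf r+\boldsymbol\delta}$. For $\mathsf{R}$: $\mathcal R^\wedge=\{\hat{\mathbf y},\mathbf 0,-\hat{\mathbf y}\}$, $\mathcal R^\vee=\{\hat{\mathbf x},\mathbf 0,-\hat{\mathbf x}\}$. For $\mathsf{F}$: $\mathcal R^\vee=\{\hat{\mathbf x},-\hat{\mathbf x}-\hat{\mathbf y}\}$, $\mathcal R^\wedge=\{\hat{\mathbf x}+\hat{\mathbf y},-\hat{\mathbf y}\}$. For $\mathsf{M}$: $\mathcal R^\vee=\{\hat{\mathbf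 x},\hat{\mathbf y}\}$, $\mathcal R^\wedge=\{\hat{\mathbf x},-\hat{\mathbf y}\}$. Noiseless asynchronous dynamics: sites are updated at times given by independent Poisson clocks, and each update is a $\wedge$-update or a $\vee$-update with probability $1/2$ each. A configuration is absorbing if no such update can change it. *)

theory Defs
  imports Main
begin

text \<open>Sites of the L x L torus are represented by integer pairs; a configuration is a
 function on int x int that is L-periodic in both coordinates with values in {1,-1}
 (+1 = true, -1 = false).\<close>

type_synonym site = "int \<times> int"
type_synonym config = "site \<Rightarrow> int"

definition is_config :: "int \<Rightarrow> config \<Rightarrow> bool" where
  "is_config L s \<longleftrightarrow> (\<forall>i j. s (i, j) \<in> {1, -1} \<and> s (i + L, j) = s (i, j) \<and> s (i, j + L) = s (i, j))"

type_synonym rule = "site set \<times> site set"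

definition same_site :: "int \<Rightarrow> site \<Rightarrow> site \<Rightarrow> bool" where
  "same_site L q r \<longleftrightarrow> fst q mod L = fst r mod L \<and> snd q mod L = snd r mod L"

definition shift :: "site \<Rightarrow> site \<Rightarrow> site" where
  "shift r d = (fst r + fst d, snd r + snd d)"

definition wedge_update :: "int \<Rightarrow> rule \<Rightarrow> config \<Rightarrow> site \<Rightarrow> config" where
  "wedge_update L \<rho> s r = (\<lambda>q. if same_site L q r then Min ((\<lambda>d. s (shift r d)) ` fst \<rho>) else s q)"

definition vee_update :: "int \<Rightarrow> rule \<Rightarrow> config \<Rightarrow> site \<Rightarrow> config" where
  "vee_update L \<rho> s r = (\<lambda>q. if same_site L q r then Max ((\<lambda>d. s (shift r d)) ` snd \<rho>) else s q)"

definition absorbing :: "int \<Rightarrow> rule \<Rightarrow> config \<Rightarrow> bool" where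
  "absorbing L \<rho> s \<longleftrightarrow> (\<forall>r. wedge_update L \<rho> s r = s \<and> vee_update L \<rho> s r = s)"

definition rule_R :: rule where
  "rule_R = ({(0, 1), (0, 0), (0, -1)}, {(1, 0), (0, 0), (-1, 0)})"

definition rule_F :: rule where
  "rule_F = ({(1, 1), (0, -1)}, {(1, 0), (-1, -1)})"

definition rule_M :: rule where
  "rule_M = ({(1, 0), (0, -1)}, {(1, 0), (0, 1)})"

definition s_plus :: config where "s_plus = (\<lambda>_. 1)"
definition s_minus :: config where "s_minus = (\<lambda>_. -1)"

end

theory Submission
  imports Defs "HOL-Library.Periodic_Fun"
begin

text \<open>At an absorbing configuration every site already carries the minimum over its
  \<open>\<and>\<close>-neighbourhood and the maximum over its \<open>\<or>\<close>-neighbourhood, so \<open>s\<close> is non-decreasing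
  along every \<open>\<delta> \<in> R\<^sup>\<and>\<close> and non-increasing along every \<open>\<delta> \<in> R\<^sup>\<or>\<close>. On the torus a
  function that is monotone along \<open>\<delta>\<close> returns to its starting value after \<open>L\<close> steps,
  so it is invariant under translation by \<open>\<delta>\<close>. For each of the three rules
  \<open>R\<^sup>\<and> \<union> R\<^sup>\<or>\<close> contains \<open>(1, 0)\<close> and one of \<open>(0, \<plusminus>1)\<close>, hence an absorbing
  configuration is constant.\<close>

definition translation_invariant :: "(site \<Rightarrow> 'a) \<Rightarrow> site \<Rightarrow> bool" where
  "translation_invariant s d \<longleftrightarrow> (\<forall>r. s (shift r d) = s r)"

lemma translation_invariant_multiple:
  assumes "translation_invariant s (a, b)"
  shows "s (shift r (k * a, k * b)) = s r"
proof -
  interpret periodic_fun_simple "\<lambda>t. s (shift r (t * a, t * b))" "1 :: int"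
  proof
    fix t :: int
    have "s (shift (shift r (t * a, t * b)) (a, b)) = s (shift r (t * a, t * b))"
      using assms unfolding translation_invariant_def by blast
    then show "s (shift r ((t + 1) * a, (t + 1) * b)) = s (shift r (t * a, t * b))"
      by (simp add: shift_def algebra_simps)
  qed
  show ?thesis
    using plus_of_int[of 0 k] by (simp add: shift_def)
qed

lemma translation_invariant_uminus:
  assumes "translation_invariant s (a, b)"
  shows "translation_invariant s (- a, - b)"
  using translation_invariant_multiple[OF assms, of _ "-1"]
  unfolding translation_invariant_def by simp

lemma translation_invariant_unit_imp_constant:
  assumes "translation_invariant s (1, 0)" "translation_invariant s (0, 1)"
  shows "s = (\<lambda>_. s (0, 0))"
proof
  fix r :: site
  obtain i j where r: "r = (i, j)" by fastforce
  have "s r = s (shift (shift (0, 0) (j * 0, j * 1)) (i * 1, i * 0))"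
    by (simp add: r shift_def)
  also have "\<dots> = s (shift (0, 0) (j * 0, j * 1))"
    using assms(1) by (rule translation_invariant_multiple)
  also have "\<dots> = s (0, 0)"
    using assms(2) by (rule translation_invariant_multiple)
  finally show "s r = s (0, 0)" .
qed

lemma is_config_translation_invariant_period:
  assumes "is_config L s"
  shows "translation_invariant s (L, 0)" and "translation_invariant s (0, L)"
  using assms unfolding is_config_def translation_invariant_def shift_def by auto

lemma nondecreasing_along_iterate:
  fixes s :: "site \<Rightarrow> 'a :: order"
  assumes "\<And>r. s r \<le> s (shift r (a, b))"
  shows "s r \<le> s (shift r (int n * a, int n * b))"
proof (induction n)
  case 0
  then show ?case by (simp add: shift_def)
next
  case (Suc n)
  also have "s (shift r (int n * a, int n * b)) \<le> s (shift (shift r (int n * a, int n * b)) (a, b))"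
    by (rule assms)
  finally show ?case by (simp add: shift_def algebra_simps)
qed

lemma periodic_nondecreasing_imp_translation_invariant:
  fixes s :: "site \<Rightarrow> 'a :: order"
  assumes "translation_invariant s (L, 0)" "translation_invariant s (0, L)" "L \<ge> 1"
    and "\<And>r. s r \<le> s (shift r d)"
  shows "translation_invariant s d"
  unfolding translation_invariant_def
proof
  fix r
  obtain a b where d: "d = (a, b)" by fastforce
  have "s (shift r d) \<le> s (shift (shift r d) (int (nat (L - 1)) * a, int (nat (L - 1)) * b))"
    using nondecreasing_along_iterate assms(4) d by blast
  also have "\<dots> = s (shift (shift r (b * 0, b * L)) (a * L, a * 0))"
    using assms(3) by (simp add: d shift_def algebra_simps)
  also have "\<dots> = s (shift r (b * 0, b * L))"
    using assms(1) by (rule translation_invariant_multiple)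
  also have "\<dots> = s r"
    using assms(2) by (rule translation_invariant_multiple)
  finally show "s (shift r d) = s r"
    using assms(4) by (simp add: antisym)
qed

lemma absorbing_imp_fixed_by_updates:
  assumes "absorbing L \<rho> s"
  shows "s r = Min ((\<lambda>d. s (shift r d)) ` fst \<rho>)"
    and "s r = Max ((\<lambda>d. s (shift r d)) ` snd \<rho>)"
proof -
  have "wedge_update L \<rho> s r = s" "vee_update L \<rho> s r = s"
    using assms unfolding absorbing_def by blast+
  then have "wedge_update L \<rho> s r r = s r" "vee_update L \<rho> s r r = s r"
    by simp_all
  then show "s r = Min ((\<lambda>d. s (shift r d)) ` fst \<rho>)"
    and "s r = Max ((\<lambda>d. s (shift r d)) ` snd \<rho>)"
    unfolding wedge_update_def vee_update_def same_site_def by simp_all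
qed

lemma absorbing_imp_translation_invariant:
  assumes "L \<ge> 1" "is_config L s" "absorbing L \<rho> s"
    and "finite (fst \<rho>)" "finite (snd \<rho>)" "d \<in> fst \<rho> \<union> snd \<rho>"
  shows "translation_invariant s d"
proof -
  note periodic = is_config_translation_invariant_period[OF assms(2)]
  obtain a b where d: "d = (a, b)" by fastforce
  show ?thesis
    using assms(6)
  proof
    assume "d \<in> fst \<rho>"
    then have "s r \<le> s (shift r d)" for r
      using absorbing_imp_fixed_by_updates(1)[OF assms(3), of r] assms(4) by simp
    then show ?thesis
      using periodic_nondecreasing_imp_translation_invariant periodic assms(1) by blast
  next
    assume "d \<in> snd \<rho>"
    then have "s (shift r d) \<le> s r" for r
      using absorbing_imp_fixed_by_updates(2)[OF assms(3), of r] assms(5) by simp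
    moreover have "shift (shift r (- a, - b)) d = r" for r
      by (simp add: d shift_def)
    ultimately have "s r \<le> s (shift r (- a, - b))" for r
      by metis
    then have "translation_invariant s (- a, - b)"
      using periodic_nondecreasing_imp_translation_invariant periodic assms(1) by blast
    then show ?thesis
      using translation_invariant_uminus d by fastforce
  qed
qed

lemma constant_absorbing:
  assumes "fst \<rho> \<noteq> {}" "snd \<rho> \<noteq> {}"
  shows "absorbing L \<rho> (\<lambda>_. c)"
proof -
  have Min: "Min ((\<lambda>_. c) ` fst \<rho>) = c" and Max: "Max ((\<lambda>_. c) ` snd \<rho>) = c"
    using assms by (simp_all add: image_constant_conv)
  show ?thesis
    unfolding absorbing_def wedge_update_def vee_update_def Min Max by simp
qed

theorem mainTheorem3:
  fixes L :: int and \<rho> :: rule and s :: config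
  assumes "L \<ge> 1"
    and "\<rho> \<in> {rule_R, rule_F, rule_M}"
    and "is_config L s"
  shows "absorbing L \<rho> s \<longleftrightarrow> s \<in> {s_plus, s_minus}"
proof
  assume absorbing: "absorbing L \<rho> s"
  have finite: "finite (fst \<rho>)" "finite (snd \<rho>)"
    using assms(2) by (auto simp: rule_R_def rule_F_def rule_M_def)
  have invariant: "translation_invariant s d" if "d \<in> fst \<rho> \<union> snd \<rho>" for d
    using absorbing_imp_translation_invariant[OF assms(1,3) absorbing finite that] .
  have "(1, 0) \<in> fst \<rho> \<union> snd \<rho>" "(0, 1) \<in> fst \<rho> \<union> snd \<rho> \<or> (0, -1) \<in> fst \<rho> \<union> snd \<rho>"
    using assms(2) by (auto simp: rule_R_def rule_F_def rule_M_def)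
  then have "translation_invariant s (1, 0)" "translation_invariant s (0, 1)"
    using invariant translation_invariant_uminus[of s 0 "-1"] by auto
  then have "s = (\<lambda>_. s (0, 0))"
    by (rule translation_invariant_unit_imp_constant)
  moreover have "s (0, 0) \<in> {1, -1}"
    using assms(3) unfolding is_config_def by blast
  ultimately show "s \<in> {s_plus, s_minus}"
    unfolding s_plus_def s_minus_def by auto
next
  assume "s \<in> {s_plus, s_minus}"
  then obtain c where "s = (\<lambda>_. c)"
    unfolding s_plus_def s_minus_def by blast
  moreover have "fst \<rho> \<noteq> {}" "snd \<rho> \<noteq> {}"
    using assms(2) by (auto simp: rule_R_def rule_F_def rule_M_def)
  ultimately show "absorbing L \<rho> s"
    using constant_absorbing by blast
qed

end
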